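(* Let $\mathcal K=(\mathcal T,\mathcal B)$ be a $\mathcal{BALC}$ knowledge base, $C,D$ $\mathcal{ALC}$ concepts and $\kappa$ a context. Then $\mathcal K\models(C\sqsubseteq D)^\kappa$ if and only if $P_{\mathcal K}((C\sqsubseteq D)^\kappa)=1$.
   Context: $V$ is a finite set of random variables, each with a finite value set; a world $\omega$ assigns a value to each variable. A Bayesian network $\mathcal B$ over $V$ defines $P_{\mathcal{B}}(\omega)=\prod_{X\in V}P(X=\omega(X)\mid \pi(X)=\omega(\pi(X)))$. A context is a set of pairs $(X,x)$, $x$ a value of $X$; $\omega\models\kappa$ iff $\omega(X)=x$ for all $(X,x)\in\kappa$. $\mathcal T$ is a finite set of contextual GCIs $(C\sqsubseteq D)^\kappa$. A $V$-interpretation $\mathcal{V}=(\Delta^{\mathcal V},\cdot^{\mathcal V},v^{\mathcal V})$ is an $\mathcal{ALC}$ interpretation plus a world; $\mathcal V\models\alpha^\kappa$ iff $v^{\mathcal V}\not\models\kappa$ or the $\mathcal{ALC}$ interpretation satisfies $\alpha$. A probabilistic interpretation $\mathcal P=(\mathcal J,P_{\mathcal J})$ is a finite set of $V$-interpretations with a distribution assigning each positive probability; $\mathcal P\models\alpha^\kappa$ iff every $\mathcal V\in\mathcal J$ does; $\mathcal P$ is a model of $\mathcal K$ iff every member satisfies all axioms of $\mathcal T$ and $\sum_{\mathcal V\in\mathcal J,\,v^{\mathcal V}=\omega}P_{\mathcal J}(\mathcal V)=P_{\mathcal B}(\omega)$ for every world $\omega$; $\mathcal K$ is consistent iff it has a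 model. $\mathcal K\models(C\sqsubseteq D)^\kappa$ iff every model of $\mathcal K$ is a model of $(C\sqsubseteq D)^\kappa$. For a model $\mathcal P$, $P_{\mathcal P}((C\sqsubseteq D)^\kappa)=\sum_{\mathcal V\in\mathcal J,\ \mathcal V\models(C\sqsubseteq D)^\kappa}P_{\mathcal J}(\mathcal V)$, and $P_{\mathcal K}((C\sqsubseteq D)^\kappa)=\inf_{\mathcal P\models\mathcal K}P_{\mathcal P}((C\sqsubseteq D)^\kappa)$; if $\mathcal K$ is inconsistent this probability is defined to be $1$. *)

theory Defs
  imports Complex_Main "HOL-Library.FuncSet"
begin

record ('v, 'x) bn =
  bvars :: "'v set"
  bvals :: "'v \<Rightarrow> 'x set"
  bpar  :: "'v \<Rightarrow> 'v set"
  bcpt  :: "'v \<Rightarrow> 'x \<Rightarrow> ('v \<Rightarrow> 'x) \<Rightarrow> real"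

definition worlds :: "('v, 'x) bn \<Rightarrow> ('v \<Rightarrow> 'x) set" where
  "worlds B = (\<Pi>\<^sub>E X\<in>bvars B. bvals B X)"

definition parent_assignments :: "('v, 'x) bn \<Rightarrow> 'v \<Rightarrow> ('v \<Rightarrow> 'x) set" where
  "parent_assignments B X = (\<Pi>\<^sub>E Y\<in>bpar B X. bvals B Y)"

definition is_bn :: "('v, 'x) bn \<Rightarrow> bool" where
  "is_bn B \<longleftrightarrow>
     finite (bvars B) \<and>
     (\<forall>X\<in>bvars B. finite (bvals B X) \<and> bvals B X \<noteq> {}) \<and>
     (\<forall>X\<in>bvars B. bpar B X \<subseteq> bvars B) \<and>
     acyclic {(Y, X). X \<in> bvars B \<and> Y \<in> bpar B X} \<and>
     (\<forall>X\<in>bvars B. \<forall>u\<in>parent_assignments B X.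
        (\<forall>x\<in>bvals B X. 0 \<le> bcpt B X x u) \<and> (\<Sum>x\<in>bvals B X. bcpt B X x u) = 1)"

definition bn_prob :: "('v, 'x) bn \<Rightarrow> ('v \<Rightarrow> 'x) \<Rightarrow> real" where
  "bn_prob B \<omega> = (\<Prod>X\<in>bvars B. bcpt B X (\<omega> X) (restrict \<omega> (bpar B X)))"

type_synonym ('v, 'x) ctxt = "('v \<times> 'x) set"

definition is_context :: "('v, 'x) bn \<Rightarrow> ('v, 'x) ctxt \<Rightarrow> bool" where
  "is_context B \<kappa> \<longleftrightarrow> (\<forall>(X, x)\<in>\<kappa>. X \<in> bvars B \<and> x \<in> bvals B X)"

definition world_models :: "('v \<Rightarrow> 'x) \<Rightarrow> ('v, 'x) ctxt \<Rightarrow> bool" where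
  "world_models \<omega> \<kappa> \<longleftrightarrow> (\<forall>(X, x)\<in>\<kappa>. \<omega> X = x)"

datatype ('c, 'r) concept =
    Top
  | Bot
  | Atom 'c
  | Neg "('c, 'r) concept"
  | Conj "('c, 'r) concept" "('c, 'r) concept"
  | Disj "('c, 'r) concept" "('c, 'r) concept"
  | Ex 'r "('c, 'r) concept"
  | All 'r "('c, 'r) concept"

record ('c, 'r, 'd, 'v, 'x) vinterp =
  idom  :: "'d set"
  icon  :: "'c \<Rightarrow> 'd set"
  irole :: "'r \<Rightarrow> ('d \<times> 'd) set"
  iworld :: "'v \<Rightarrow> 'x"

fun cext :: "('c, 'r, 'd, 'v, 'x) vinterp \<Rightarrow> ('c, 'r) concept \<Rightarrow> 'd set" where
  "cext I Top = idom I"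
| "cext I Bot = {}"
| "cext I (Atom A) = icon I A"
| "cext I (Neg C) = idom I - cext I C"
| "cext I (Conj C D) = cext I C \<inter> cext I D"
| "cext I (Disj C D) = cext I C \<union> cext I D"
| "cext I (Ex r C) = {a \<in> idom I. \<exists>b. (a, b) \<in> irole I r \<and> b \<in> cext I C}"
| "cext I (All r C) = {a \<in> idom I. \<forall>b. (a, b) \<in> irole I r \<longrightarrow> b \<in> cext I C}"

definition is_vinterp :: "('v, 'x) bn \<Rightarrow> ('c, 'r, 'd, 'v, 'x) vinterp \<Rightarrow> bool" where
  "is_vinterp B I \<longleftrightarrow>
     idom I \<noteq> {} \<and> (\<forall>A. icon I A \<subseteq> idom I) \<and> (\<forall>r. irole I r \<subseteq> idom I \<times> idom I) \<and>
     iworld I \<in> worlds B"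

type_synonym ('c, 'r, 'v, 'x) cgci = "('c, 'r) concept \<times> ('c, 'r) concept \<times> ('v, 'x) ctxt"

definition vsat :: "('c, 'r, 'd, 'v, 'x) vinterp \<Rightarrow> ('c, 'r, 'v, 'x) cgci \<Rightarrow> bool" where
  "vsat I ax = (case ax of (C, D, \<kappa>) \<Rightarrow>
     \<not> world_models (iworld I) \<kappa> \<or> cext I C \<subseteq> cext I D)"

type_synonym ('c, 'r, 'v, 'x) kb = "('c, 'r, 'v, 'x) cgci set \<times> ('v, 'x) bn"

definition is_kb :: "('c, 'r, 'v, 'x) kb \<Rightarrow> bool" where
  "is_kb K \<longleftrightarrow> finite (fst K) \<and> is_bn (snd K) \<and>
     (\<forall>(C, D, \<kappa>)\<in>fst K. is_context (snd K) \<kappa>)"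

type_synonym ('c, 'r, 'd, 'v, 'x) pinterp =
  "('c, 'r, 'd, 'v, 'x) vinterp set \<times> (('c, 'r, 'd, 'v, 'x) vinterp \<Rightarrow> real)"

definition is_pinterp :: "('v, 'x) bn \<Rightarrow> ('c, 'r, 'd, 'v, 'x) pinterp \<Rightarrow> bool" where
  "is_pinterp B P \<longleftrightarrow> finite (fst P) \<and> (\<forall>I\<in>fst P. is_vinterp B I \<and> snd P I > 0) \<and>
     (\<Sum>I\<in>fst P. snd P I) = 1"

definition psat :: "('c, 'r, 'd, 'v, 'x) pinterp \<Rightarrow> ('c, 'r, 'v, 'x) cgci \<Rightarrow> bool" where
  "psat P ax \<longleftrightarrow> (\<forall>I\<in>fst P. vsat I ax)"

definition is_model :: "('c, 'r, 'v, 'x) kb \<Rightarrow> ('c, 'r, 'd, 'v, 'x) pinterp \<Rightarrow> bool" where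
  "is_model K P \<longleftrightarrow> is_pinterp (snd K) P \<and> (\<forall>ax\<in>fst K. psat P ax) \<and>
     (\<forall>\<omega>\<in>worlds (snd K). (\<Sum>I\<in>{I\<in>fst P. iworld I = \<omega>}. snd P I) = bn_prob (snd K) \<omega>)"

text \<open>Models are taken with domain elements from an arbitrary (universally quantified)
type \<open>'d\<close>, passed explicitly.\<close>
definition consistent :: "'d itself \<Rightarrow> ('c, 'r, 'v, 'x) kb \<Rightarrow> bool" where
  "consistent (_ :: 'd itself) K \<longleftrightarrow>
     (\<exists>P :: ('c, 'r, 'd, 'v, 'x) pinterp. is_model K P)"

definition entails :: "'d itself \<Rightarrow> ('c, 'r, 'v, 'x) kb \<Rightarrow> ('c, 'r, 'v, 'x) cgci \<Rightarrow> bool" where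
  "entails (_ :: 'd itself) K ax \<longleftrightarrow>
     (\<forall>P :: ('c, 'r, 'd, 'v, 'x) pinterp. is_model K P \<longrightarrow> psat P ax)"

definition pint_prob :: "('c, 'r, 'd, 'v, 'x) pinterp \<Rightarrow> ('c, 'r, 'v, 'x) cgci \<Rightarrow> real" where
  "pint_prob P ax = (\<Sum>I\<in>{I\<in>fst P. vsat I ax}. snd P I)"

definition kb_prob :: "'d itself \<Rightarrow> ('c, 'r, 'v, 'x) kb \<Rightarrow> ('c, 'r, 'v, 'x) cgci \<Rightarrow> real" where
  "kb_prob (_ :: 'd itself) K ax =
     (if consistent TYPE('d) K
      then Inf {pint_prob P ax | P :: ('c, 'r, 'd, 'v, 'x) pinterp. is_model K P}
      else 1)"

end

theory Submission
  imports Defs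
begin

text \<open>In a probabilistic interpretation every V-interpretation carries positive weight, so
the probability of an axiom, i.e. the weight of the V-interpretations satisfying it, is \<open>1\<close>
exactly when no V-interpretation violates it. Consequently the infimum over all models is
\<open>1\<close> iff every model satisfies the axiom, which is entailment. An inconsistent knowledge base
entails everything and has probability \<open>1\<close> by convention.\<close>

lemma one_minus_pint_prob:
  assumes "is_pinterp B P"
  shows "1 - pint_prob P ax = (\<Sum>I\<in>{I\<in>fst P. \<not> vsat I ax}. snd P I)"
proof -
  have "1 = (\<Sum>I\<in>fst P. snd P I)"
    using assms by (simp add: is_pinterp_def)
  also have "\<dots> = pint_prob P ax + (\<Sum>I\<in>{I\<in>fst P. \<not> vsat I ax}. snd P I)"
    using assms unfolding pint_prob_def is_pinterp_def
    by (subst sum.Int_Diff[where B = "{I. vsat I ax}"]) (auto intro!: arg_cong2[where f = "(+)"] sum.cong)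
  finally show ?thesis by simp
qed

lemma pint_prob_le_1:
  assumes "is_pinterp B P"
  shows "pint_prob P ax \<le> 1"
proof -
  have "0 \<le> (\<Sum>I\<in>{I\<in>fst P. \<not> vsat I ax}. snd P I)"
    using assms by (intro sum_nonneg) (auto simp: is_pinterp_def less_imp_le)
  then show ?thesis
    using one_minus_pint_prob[OF assms, of ax] by simp
qed

lemma pint_prob_nonneg:
  assumes "is_pinterp B P"
  shows "0 \<le> pint_prob P ax"
  unfolding pint_prob_def
  using assms by (intro sum_nonneg) (auto simp: is_pinterp_def less_imp_le)

lemma pint_prob_eq_1_iff_psat:
  assumes "is_pinterp B P"
  shows "pint_prob P ax = 1 \<longleftrightarrow> psat P ax"
proof -
  let ?U = "{I\<in>fst P. \<not> vsat I ax}"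
  have pos: "\<forall>I\<in>?U. 0 < snd P I"
    using assms by (auto simp: is_pinterp_def)
  have "pint_prob P ax = 1 \<longleftrightarrow> (\<Sum>I\<in>?U. snd P I) = 0"
    using one_minus_pint_prob[OF assms, of ax] by linarith
  also have "\<dots> \<longleftrightarrow> (\<forall>I\<in>?U. snd P I = 0)"
    using assms pos by (intro sum_nonneg_eq_0_iff) (auto simp: is_pinterp_def less_imp_le)
  also have "\<dots> \<longleftrightarrow> ?U = {}"
    using pos by force
  also have "\<dots> \<longleftrightarrow> psat P ax"
    by (auto simp: psat_def)
  finally show ?thesis .
qed

lemma cInf_eq_iff_all_eq:
  fixes S :: "'a :: conditionally_complete_linorder set"
  assumes "S \<noteq> {}" "bdd_below S" "\<forall>s\<in>S. s \<le> c"
  shows "Inf S = c \<longleftrightarrow> (\<forall>s\<in>S. s = c)"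
proof
  assume "Inf S = c"
  then show "\<forall>s\<in>S. s = c"
    using assms cInf_lower[of _ S] by (auto intro: order.antisym)
next
  assume "\<forall>s\<in>S. s = c"
  then have "S = {c}"
    using assms(1) by auto
  then show "Inf S = c"
    by simp
qed

lemma kb_prob_eq_1_iff_entails:
  fixes K :: "('c, 'r, 'v, 'x) kb" and ax :: "('c, 'r, 'v, 'x) cgci"
  assumes "consistent TYPE('d) K"
  shows "kb_prob TYPE('d) K ax = 1 \<longleftrightarrow> entails TYPE('d) K ax"
proof -
  define S where "S = {pint_prob P ax | P :: ('c, 'r, 'd, 'v, 'x) pinterp. is_model K P}"
  have pinterp: "is_pinterp (snd K) P" if "is_model K P" for P :: "('c, 'r, 'd, 'v, 'x) pinterp"
    using that by (simp add: is_model_def)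
  have "S \<noteq> {}"
    using assms by (auto simp: consistent_def S_def)
  moreover have "bdd_below S"
    unfolding S_def by (rule bdd_belowI[of _ 0]) (auto dest: pinterp intro: pint_prob_nonneg)
  moreover have "\<forall>s\<in>S. s \<le> 1"
    unfolding S_def by (auto dest: pinterp intro: pint_prob_le_1)
  ultimately have "Inf S = 1 \<longleftrightarrow> (\<forall>s\<in>S. s = 1)"
    by (rule cInf_eq_iff_all_eq)
  also have "\<dots> \<longleftrightarrow> entails TYPE('d) K ax"
    unfolding S_def entails_def using pinterp pint_prob_eq_1_iff_psat by blast
  finally show ?thesis
    using assms by (simp add: kb_prob_def S_def)
qed

theorem mainTheorem6:
  fixes K :: "('c, 'r, 'v, 'x) kb"
    and C D :: "('c, 'r) concept"
    and \<kappa> :: "('v, 'x) ctxt"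
  assumes "is_kb K"
    and "is_context (snd K) \<kappa>"
  shows "entails TYPE('d) K (C, D, \<kappa>) \<longleftrightarrow> kb_prob TYPE('d) K (C, D, \<kappa>) = 1"
proof (cases "consistent TYPE('d) K")
  case True
  then show ?thesis
    by (simp add: kb_prob_eq_1_iff_entails)
next
  case False
  then show ?thesis
    by (auto simp: consistent_def entails_def kb_prob_def)
qed

end
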